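(* Let $(S,\gamma)$ be a generic $C^\infty$ surface with boundary in $\mathbf{R}^3$ and let $\gamma(s_1)$ be a swallowtail-tangent point. Then the distance $d$ between $\gamma(s_1)$ and the corresponding swallowtail point of the boundary-envelope (the envelope-swallowtail) is $$d=\left|\frac{\kappa_2\sqrt{\kappa_2^2+\kappa_3^2}}{\kappa_2(\kappa_3'+\kappa_1\kappa_2)+\kappa_3(-\kappa_2'+\kappa_1\kappa_3)}\right|,$$ evaluated at $s=s_1$.
   Context: $S\subset\mathbf{R}^3$ is a co-oriented immersed $C^\infty$ surface with boundary curve $\gamma(s)$ parametrised by arc length; "generic" means for all surfaces in a residual subset w.r.t. the $C^\infty$ topology; primes denote $d/ds$. Adapted frame: $\boldsymbol e_1=\gamma'$, $\boldsymbol e_3=\boldsymbol n$ the unit normal, $\boldsymbol e_2=\boldsymbol e_3\times\boldsymbol e_1$; $\kappa_1,\kappa_2,\kappa_3$ are defined by $\boldsymbol e_1'=\kappa_1\boldsymbol e_2+\kappa_2\boldsymbol e_3$, $\boldsymbol e_2'=-\kappa_1\boldsymbol e_1+\kappa_3\boldsymbol e_3$, $\boldsymbol e_3'=-\kappa_2\boldsymbol e_1-\kappa_3\boldsymbol e_2$. The boundary-envelope is the envelope in $\mathbf{R}P^3$ of the one-parameter family of planes $T_{\gamma(s)}S=\{x: x\cdot\boldsymbol n(s)=\gamma(s)\cdot\boldsymbol n(s)\}$. A point $\gamma(s_1)$ is swallowtail-tangent if $T_{\gamma(s_1)}S$ contacts the boundary-envelope at a swallowtail singular point of the envelope (a germ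 right-left equivalent to $(x,t)\mapsto(x,4t^3-2xt,3t^4-xt^2)$); that swallowtail point is the envelope-swallowtail corresponding to $\gamma(s_1)$. (If the denominator vanishes the envelope-swallowtail lies at infinity.) *)

theory Defs
  imports "HOL-Analysis.Analysis"
begin

fun pderivs :: "'a::euclidean_space list \<Rightarrow> ('a \<Rightarrow> 'b::real_normed_vector) \<Rightarrow> 'a \<Rightarrow> 'b" where
  "pderivs [] f = f"
| "pderivs (v # vs) f = (\<lambda>x. vector_derivative (\<lambda>t. pderivs vs f (x + t *\<^sub>R v)) (at 0))"

definition smooth_on :: "'a::euclidean_space set \<Rightarrow> ('a \<Rightarrow> 'b::real_normed_vector) \<Rightarrow> bool" where
  "smooth_on U f \<longleftrightarrow> open U \<and>
     (\<forall>vs. set vs \<subseteq> Basis \<longrightarrow>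
        continuous_on U (pderivs vs f) \<and>
        (\<forall>x\<in>U. \<forall>v\<in>Basis. (\<lambda>t. pderivs vs f (x + t *\<^sub>R v)) differentiable (at 0)))"

definition diffeo_on :: "'a::euclidean_space set \<Rightarrow> 'a set \<Rightarrow> ('a \<Rightarrow> 'a) \<Rightarrow> bool" where
  "diffeo_on U V \<phi> \<longleftrightarrow> open U \<and> open V \<and> bij_betw \<phi> U V \<and>
     smooth_on U \<phi> \<and> smooth_on V (inv_into U \<phi>)"

definition rl_equiv_germ ::
  "'a::euclidean_space set \<Rightarrow> ('a \<Rightarrow> 'b::euclidean_space) \<Rightarrow> 'a \<Rightarrow> ('a \<Rightarrow> 'b) \<Rightarrow> 'a \<Rightarrow> bool" where
  "rl_equiv_germ D f a g b \<longleftrightarrow>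
     (\<exists>U U' W W' \<phi> \<psi>. b \<in> U \<and> U' \<subseteq> D \<and> f a \<in> W \<and>
        diffeo_on U U' \<phi> \<and> diffeo_on W W' \<psi> \<and> \<phi> b = a \<and>
        (\<forall>z\<in>U. f (\<phi> z) \<in> W \<and> \<psi> (f (\<phi> z)) = g z))"

definition swallowtail_germ :: "real \<times> real \<Rightarrow> real ^ 3" where
  "swallowtail_germ = (\<lambda>(x, t). vector [x, 4 * t ^ 3 - 2 * x * t, 3 * t ^ 4 - x * t ^ 2])"

definition frame_e1 :: "(real \<Rightarrow> real ^ 3) \<Rightarrow> real \<Rightarrow> real ^ 3" where
  "frame_e1 \<gamma> s = vector_derivative \<gamma> (at s)"

definition frame_e2 :: "(real \<Rightarrow> real ^ 3) \<Rightarrow> (real \<Rightarrow> real ^ 3) \<Rightarrow> real \<Rightarrow> real ^ 3" where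
  "frame_e2 \<gamma> n s = cross3 (n s) (frame_e1 \<gamma> s)"

text \<open>The curvatures are the coefficients in the frame equations
  e1' = k1 e2 + k2 e3, e2' = -k1 e1 + k3 e3 (e3 = n).\<close>
definition kappa1 :: "(real \<Rightarrow> real ^ 3) \<Rightarrow> (real \<Rightarrow> real ^ 3) \<Rightarrow> real \<Rightarrow> real" where
  "kappa1 \<gamma> n s = vector_derivative (frame_e1 \<gamma>) (at s) \<bullet> frame_e2 \<gamma> n s"

definition kappa2 :: "(real \<Rightarrow> real ^ 3) \<Rightarrow> (real \<Rightarrow> real ^ 3) \<Rightarrow> real \<Rightarrow> real" where
  "kappa2 \<gamma> n s = vector_derivative (frame_e1 \<gamma>) (at s) \<bullet> n s"

definition kappa3 :: "(real \<Rightarrow> real ^ 3) \<Rightarrow> (real \<Rightarrow> real ^ 3) \<Rightarrow> real \<Rightarrow> real" where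
  "kappa3 \<gamma> n s = vector_derivative (frame_e2 \<gamma> n) (at s) \<bullet> n s"

text \<open>Affine part of the envelope of the planes T_{gamma(s)}S = {x. x . n(s) = gamma(s) . n(s)}:
  the characteristic line of parameter s is the intersection of the plane with its
  derivative plane, i.e. gamma(s) + u (n(s) x n'(s)).\<close>
definition envelope_map :: "(real \<Rightarrow> real ^ 3) \<Rightarrow> (real \<Rightarrow> real ^ 3) \<Rightarrow> real \<times> real \<Rightarrow> real ^ 3" where
  "envelope_map \<gamma> n = (\<lambda>(s, u). \<gamma> s + u *\<^sub>R cross3 (n s) (vector_derivative n (at s)))"

text \<open>gamma(s1) is swallowtail-tangent and p (a finite point) is the corresponding
  envelope-swallowtail: T_{gamma(s1)}S contacts the envelope at p = envelope point on the
  characteristic line of s1, where the envelope germ is a swallowtail.\<close>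
definition envelope_swallowtail ::
  "real set \<Rightarrow> (real \<Rightarrow> real ^ 3) \<Rightarrow> (real \<Rightarrow> real ^ 3) \<Rightarrow> real \<Rightarrow> real ^ 3 \<Rightarrow> bool" where
  "envelope_swallowtail I \<gamma> n s1 p \<longleftrightarrow>
     (\<exists>u. p = envelope_map \<gamma> n (s1, u) \<and>
          rl_equiv_germ (I \<times> UNIV) (envelope_map \<gamma> n) (s1, u) swallowtail_germ (0, 0))"

end

theory Submission
  imports Defs
begin

(* At a swallowtail point (s1, u) of the boundary-envelope F(s, u) = gamma(s) + u (n x n')(s) the
   differential DF is singular, since that of the swallowtail germ is.  In the adapted frame
   n x n' = k3 e1 - k2 e2, and its derivative is A e1 + B e2 with A = k3' + k1 k2, B = -k2' + k1 k3;
   hence DF(s1, u) is singular exactly when k2 + u (k2 A + k3 B) = 0.  This determines u, and the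
   distance from gamma(s1) to F(s1, u) is |u| |n x n'| = |u| sqrt(k2^2 + k3^2).
   If k2 A + k3 B = 0 then k2 = 0, and n x n' must vanish: otherwise B = 0 and every point of the
   characteristic line is singular, while the singular set of a swallowtail is a curve tangent to the
   kernel of the differential at the swallowtail point; so d/du, whose image is n x n', is in that
   kernel. *)

section \<open>Smooth maps\<close>

lemma has_vector_derivative_shift_at_0_iff:
  fixes g :: "real \<Rightarrow> 'b::real_normed_vector"
  shows "((\<lambda>s. g (a + s)) has_vector_derivative D) (at 0) \<longleftrightarrow> (g has_vector_derivative D) (at a)"
proof
  assume "((\<lambda>s. g (a + s)) has_vector_derivative D) (at 0)"
  moreover have "((\<lambda>x. x - a) has_vector_derivative 1) (at a)"
    by (auto intro!: derivative_eq_intros)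
  ultimately have "((\<lambda>s. g (a + s)) \<circ> (\<lambda>x. x - a) has_vector_derivative 1 *\<^sub>R D) (at a)"
    by (intro vector_diff_chain_at) simp_all
  then show "(g has_vector_derivative D) (at a)" by (simp add: o_def)
next
  assume "(g has_vector_derivative D) (at a)"
  moreover have "((\<lambda>x. a + x) has_vector_derivative 1) (at 0)"
    by (auto intro!: derivative_eq_intros)
  ultimately have "(g \<circ> (\<lambda>x. a + x) has_vector_derivative 1 *\<^sub>R D) (at 0)"
    by (intro vector_diff_chain_at) simp_all
  then show "((\<lambda>s. g (a + s)) has_vector_derivative D) (at 0)" by (simp add: o_def)
qed

lemma vector_derivative_shift_at_0:
  fixes g :: "real \<Rightarrow> 'b::real_normed_vector"
  shows "vector_derivative (\<lambda>s. g (a + s)) (at 0) = vector_derivative g (at a)"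
  unfolding vector_derivative_def has_vector_derivative_shift_at_0_iff ..

lemma pderivs_append: "pderivs vs (pderivs ws f) = pderivs (vs @ ws) f"
  by (induction vs) auto

lemma smooth_on_pderivs: "smooth_on U f \<Longrightarrow> set ws \<subseteq> Basis \<Longrightarrow> smooth_on U (pderivs ws f)"
  unfolding smooth_on_def pderivs_append by auto

lemma smooth_on_real_has_vector_derivative:
  fixes h :: "real \<Rightarrow> 'b::real_normed_vector"
  assumes "smooth_on I h" "x \<in> I"
  shows "(h has_vector_derivative vector_derivative h (at x)) (at x)"
proof -
  have "set [] \<subseteq> (Basis::real set)" by simp
  then have "(\<lambda>t. pderivs [] h (x + t *\<^sub>R 1)) differentiable (at 0)"
    using assms unfolding smooth_on_def Basis_real_def by blast
  then show ?thesis
    by (simp add: vector_derivative_works has_vector_derivative_shift_at_0_iff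
        vector_derivative_shift_at_0)
qed

lemma smooth_on_real_vector_derivative:
  fixes h :: "real \<Rightarrow> 'b::real_normed_vector"
  assumes "smooth_on I h"
  shows "smooth_on I (\<lambda>x. vector_derivative h (at x))"
  using smooth_on_pderivs[OF assms, of "[1]"]
  by (simp add: Basis_real_def vector_derivative_shift_at_0)

lemma sum_abs_inner_Basis_le: "(\<Sum>b\<in>Basis. \<bar>h \<bullet> b\<bar>) \<le> DIM('a) * norm (h::'a::euclidean_space)"
proof -
  have "(\<Sum>b\<in>Basis. \<bar>h \<bullet> b\<bar>) \<le> (\<Sum>b\<in>(Basis::'a set). norm h)"
    by (intro sum_mono) (simp add: Basis_le_norm)
  then show ?thesis by simp
qed

lemma norm_sum_inner_Basis_le:
  fixes h :: "'a::euclidean_space"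
  assumes "B \<subseteq> Basis"
  shows "norm (\<Sum>b\<in>B. (h \<bullet> b) *\<^sub>R b) \<le> (\<Sum>b\<in>B. \<bar>h \<bullet> b\<bar>)"
proof -
  have "norm (\<Sum>b\<in>B. (h \<bullet> b) *\<^sub>R b) \<le> (\<Sum>b\<in>B. norm ((h \<bullet> b) *\<^sub>R b))" by (rule norm_sum)
  also have "\<dots> = (\<Sum>b\<in>B. \<bar>h \<bullet> b\<bar>)"
    using assms by (intro sum.cong) auto
  finally show ?thesis .
qed

lemma segment_linearization_bound:
  fixes f :: "'a::real_normed_vector \<Rightarrow> 'b::real_normed_vector"
  assumes deriv: "\<And>\<tau>. \<tau> \<in> closed_segment 0 t \<Longrightarrow>
      ((\<lambda>s. f (q + s *\<^sub>R c)) has_vector_derivative f' (q + \<tau> *\<^sub>R c)) (at \<tau>)"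
    and close: "\<And>\<tau>. \<tau> \<in> closed_segment 0 t \<Longrightarrow> norm (f' (q + \<tau> *\<^sub>R c) - v) \<le> \<epsilon>"
  shows "norm (f (q + t *\<^sub>R c) - f q - t *\<^sub>R v) \<le> \<epsilon> * \<bar>t\<bar>"
proof -
  let ?g = "\<lambda>s. f (q + s *\<^sub>R c) - s *\<^sub>R v"
  have g_deriv: "(?g has_derivative (\<lambda>h. h *\<^sub>R (f' (q + \<tau> *\<^sub>R c) - v))) (at \<tau> within closed_segment 0 t)"
    if "\<tau> \<in> closed_segment 0 t" for \<tau>
  proof -
    have "((\<lambda>s. s *\<^sub>R v) has_vector_derivative v) (at \<tau>)"
      by (auto intro!: derivative_eq_intros)
    then have "(?g has_vector_derivative f' (q + \<tau> *\<^sub>R c) - v) (at \<tau>)"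
      by (rule has_vector_derivative_diff[OF deriv[OF that]])
    then show ?thesis
      unfolding has_vector_derivative_def by (rule has_derivative_at_withinI)
  qed
  have g_deriv_bound: "onorm (\<lambda>h::real. h *\<^sub>R (f' (q + \<tau> *\<^sub>R c) - v)) \<le> \<epsilon>"
    if "\<tau> \<in> closed_segment 0 t" for \<tau>
    using close[OF that] by (simp add: onorm_scaleR_left onorm_id)
  have "norm (?g t - ?g 0) \<le> \<epsilon> * norm (t - 0)"
    by (rule differentiable_bound[OF convex_closed_segment g_deriv g_deriv_bound
          ends_in_segment(2) ends_in_segment(1)])
  then show ?thesis by (simp add: algebra_simps)
qed

lemma dist_coordinate_partial_sum_le:
  fixes h :: "'a::euclidean_space"
  assumes "B \<subseteq> Basis" "c \<in> Basis" "c \<notin> B" "\<bar>\<tau>\<bar> \<le> \<bar>h \<bullet> c\<bar>"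
  shows "dist (x + (\<Sum>b\<in>B. (h \<bullet> b) *\<^sub>R b) + \<tau> *\<^sub>R c) x \<le> (\<Sum>b\<in>Basis. \<bar>h \<bullet> b\<bar>)"
proof -
  have "dist (x + (\<Sum>b\<in>B. (h \<bullet> b) *\<^sub>R b) + \<tau> *\<^sub>R c) x
      = norm ((\<Sum>b\<in>B. (h \<bullet> b) *\<^sub>R b) + \<tau> *\<^sub>R c)"
    by (simp add: dist_norm add.assoc)
  also have "\<dots> \<le> norm (\<Sum>b\<in>B. (h \<bullet> b) *\<^sub>R b) + norm (\<tau> *\<^sub>R c)"
    by (rule norm_triangle_ineq)
  also have "\<dots> \<le> (\<Sum>b\<in>B. \<bar>h \<bullet> b\<bar>) + \<bar>h \<bullet> c\<bar>"
    using norm_sum_inner_Basis_le[OF assms(1), of h] assms(2,4) by simp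
  also have "\<dots> = (\<Sum>b\<in>insert c B. \<bar>h \<bullet> b\<bar>)"
    using assms(3) finite_subset[OF assms(1) finite_Basis] by simp
  also have "\<dots> \<le> (\<Sum>b\<in>Basis. \<bar>h \<bullet> b\<bar>)"
    using assms(1,2) by (intro sum_mono2) auto
  finally show ?thesis .
qed

lemma partial_sum_linearization_bound:
  fixes f :: "'a::euclidean_space \<Rightarrow> 'b::real_normed_vector"
  assumes partial: "\<And>y i. dist y x < d \<Longrightarrow> i \<in> Basis \<Longrightarrow>
      ((\<lambda>t. f (y + t *\<^sub>R i)) has_vector_derivative Dp i y) (at 0)"
    and close: "\<And>y i. dist y x < d \<Longrightarrow> i \<in> Basis \<Longrightarrow> norm (Dp i y - Dp i x) \<le> \<epsilon>"
    and h: "(\<Sum>b\<in>Basis. \<bar>h \<bullet> b\<bar>) < d"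
    and B: "B \<subseteq> Basis"
  shows "norm (f (x + (\<Sum>b\<in>B. (h \<bullet> b) *\<^sub>R b)) - f x - (\<Sum>b\<in>B. (h \<bullet> b) *\<^sub>R Dp b x))
    \<le> \<epsilon> * (\<Sum>b\<in>B. \<bar>h \<bullet> b\<bar>)"
  using finite_subset[OF B finite_Basis] B
proof (induction B rule: finite_subset_induct')
  case empty
  then show ?case by simp
next
  case (insert c B)
  define q where "q = x + (\<Sum>b\<in>B. (h \<bullet> b) *\<^sub>R b)"
  define t where "t = h \<bullet> c"
  have near: "dist (q + \<tau> *\<^sub>R c) x < d" if "\<tau> \<in> closed_segment 0 t" for \<tau>
  proof -
    have "\<bar>\<tau>\<bar> \<le> \<bar>t\<bar>"
      using that by (auto simp: closed_segment_eq_real_ivl split: if_splits)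
    then show ?thesis
      using dist_coordinate_partial_sum_le[OF insert.hyps(3,2,4)] h
      unfolding q_def t_def by (meson le_less_trans)
  qed
  have step: "norm (f (q + t *\<^sub>R c) - f q - t *\<^sub>R Dp c x) \<le> \<epsilon> * \<bar>t\<bar>"
  proof (rule segment_linearization_bound)
    fix \<tau> assume \<tau>: "\<tau> \<in> closed_segment 0 t"
    show "((\<lambda>s. f (q + s *\<^sub>R c)) has_vector_derivative Dp c (q + \<tau> *\<^sub>R c)) (at \<tau>)"
      using partial[OF near[OF \<tau>] insert.hyps(2)]
      by (subst has_vector_derivative_shift_at_0_iff[of _ \<tau>, symmetric])
        (simp add: scaleR_add_left add.assoc)
    show "norm (Dp c (q + \<tau> *\<^sub>R c) - Dp c x) \<le> \<epsilon>"
      by (rule close[OF near[OF \<tau>] insert.hyps(2)])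
  qed
  have IH: "norm (f q - f x - (\<Sum>b\<in>B. (h \<bullet> b) *\<^sub>R Dp b x)) \<le> \<epsilon> * (\<Sum>b\<in>B. \<bar>h \<bullet> b\<bar>)"
    using insert.IH by (simp only: q_def)
  have point: "x + (\<Sum>b\<in>insert c B. (h \<bullet> b) *\<^sub>R b) = q + t *\<^sub>R c"
    using insert.hyps by (simp add: q_def t_def algebra_simps)
  have split: "f (q + t *\<^sub>R c) - f x - (\<Sum>b\<in>insert c B. (h \<bullet> b) *\<^sub>R Dp b x)
      = (f (q + t *\<^sub>R c) - f q - t *\<^sub>R Dp c x) + (f q - f x - (\<Sum>b\<in>B. (h \<bullet> b) *\<^sub>R Dp b x))"
    using insert.hyps by (simp add: t_def algebra_simps)
  have "norm (f (q + t *\<^sub>R c) - f x - (\<Sum>b\<in>insert c B. (h \<bullet> b) *\<^sub>R Dp b x))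
      \<le> norm (f (q + t *\<^sub>R c) - f q - t *\<^sub>R Dp c x) + norm (f q - f x - (\<Sum>b\<in>B. (h \<bullet> b) *\<^sub>R Dp b x))"
    unfolding split by (rule norm_triangle_ineq)
  also have "\<dots> \<le> \<epsilon> * \<bar>t\<bar> + \<epsilon> * (\<Sum>b\<in>B. \<bar>h \<bullet> b\<bar>)"
    using step IH by (rule add_mono)
  also have "\<dots> = \<epsilon> * (\<Sum>b\<in>insert c B. \<bar>h \<bullet> b\<bar>)"
    using insert.hyps by (simp add: t_def algebra_simps)
  finally show ?case unfolding point .
qed

lemma has_derivative_continuous_partials:
  fixes f :: "'a::euclidean_space \<Rightarrow> 'b::real_normed_vector"
  assumes "open U" "x \<in> U"
    and partial: "\<And>y i. y \<in> U \<Longrightarrow> i \<in> Basis \<Longrightarrow>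
      ((\<lambda>t. f (y + t *\<^sub>R i)) has_vector_derivative Dp i y) (at 0)"
    and cont: "\<And>i. i \<in> Basis \<Longrightarrow> continuous_on U (Dp i)"
  shows "(f has_derivative (\<lambda>h. \<Sum>i\<in>Basis. (h \<bullet> i) *\<^sub>R Dp i x)) (at x)"
  unfolding has_derivative_at_alt
proof (intro conjI allI impI)
  show "bounded_linear (\<lambda>h. \<Sum>i\<in>Basis. (h \<bullet> i) *\<^sub>R Dp i x)"
    by (intro bounded_linear_sum bounded_linear_scaleR_const bounded_linear_inner_left)
  fix e :: real assume "e > 0"
  define \<epsilon> where "\<epsilon> = e / DIM('a)"
  have "\<epsilon> > 0" using \<open>e > 0\<close> by (simp add: \<epsilon>_def)
  have "\<forall>\<^sub>F y in nhds x. y \<in> U \<and> (\<forall>i\<in>Basis. dist (Dp i y) (Dp i x) < \<epsilon>)"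
  proof (intro eventually_conj eventually_ball_finite ballI finite_Basis)
    show "\<forall>\<^sub>F y in nhds x. y \<in> U" using assms(1,2) eventually_nhds by blast
    fix i :: 'a assume "i \<in> Basis"
    then have "(Dp i \<longlongrightarrow> Dp i x) (nhds x)"
      using cont assms(1,2) continuous_on_eq_continuous_at isCont_def tendsto_at_iff_tendsto_nhds
      by blast
    then show "\<forall>\<^sub>F y in nhds x. dist (Dp i y) (Dp i x) < \<epsilon>" using \<open>\<epsilon> > 0\<close> tendstoD by blast
  qed
  then obtain d where "d > 0"
    and d: "\<And>y. dist y x < d \<Longrightarrow> y \<in> U \<and> (\<forall>i\<in>Basis. dist (Dp i y) (Dp i x) < \<epsilon>)"
    unfolding eventually_nhds_metric by blast
  show "\<exists>d'>0. \<forall>y. norm (y - x) < d' \<longrightarrow>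
      norm (f y - f x - (\<Sum>i\<in>Basis. ((y - x) \<bullet> i) *\<^sub>R Dp i x)) \<le> e * norm (y - x)"
  proof (intro exI[of _ "d / DIM('a)"] conjI allI impI)
    show "d / DIM('a) > 0" using \<open>d > 0\<close> by simp
    fix y assume y: "norm (y - x) < d / DIM('a)"
    have "(\<Sum>b\<in>Basis. \<bar>(y - x) \<bullet> b\<bar>) < d"
      using sum_abs_inner_Basis_le[of "y - x"] y by (simp add: field_simps)
    then have "norm (f (x + (\<Sum>b\<in>Basis. ((y - x) \<bullet> b) *\<^sub>R b)) - f x
        - (\<Sum>b\<in>Basis. ((y - x) \<bullet> b) *\<^sub>R Dp b x)) \<le> \<epsilon> * (\<Sum>b\<in>Basis. \<bar>(y - x) \<bullet> b\<bar>)"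
      using d partial by (intro partial_sum_linearization_bound) (auto simp: dist_norm less_imp_le)
    also have "\<dots> \<le> e * norm (y - x)"
      using sum_abs_inner_Basis_le[of "y - x"] \<open>\<epsilon> > 0\<close>
      by (simp add: \<epsilon>_def field_simps mult_left_mono)
    finally show "norm (f y - f x - (\<Sum>i\<in>Basis. ((y - x) \<bullet> i) *\<^sub>R Dp i x)) \<le> e * norm (y - x)"
      by (simp add: euclidean_representation)
  qed
qed

lemma smooth_on_differentiable:
  fixes f :: "'a::euclidean_space \<Rightarrow> 'b::real_normed_vector"
  assumes "smooth_on U f" "x \<in> U"
  shows "f differentiable (at x)"
proof -
  have "open U" using assms(1) by (simp add: smooth_on_def)
  moreover have "((\<lambda>t. f (y + t *\<^sub>R i)) has_vector_derivative pderivs [i] f y) (at 0)"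
    if "y \<in> U" "i \<in> Basis" for y i
  proof -
    have "set [] \<subseteq> Basis" by simp
    then have "(\<lambda>t. pderivs [] f (y + t *\<^sub>R i)) differentiable (at 0)"
      using assms(1) that unfolding smooth_on_def by blast
    then show ?thesis by (simp add: vector_derivative_works)
  qed
  moreover have "continuous_on U (pderivs [i] f)" if "i \<in> Basis" for i
  proof -
    have "set [i] \<subseteq> Basis" using that by simp
    then show ?thesis using assms(1) unfolding smooth_on_def by blast
  qed
  ultimately have "(f has_derivative (\<lambda>h. \<Sum>i\<in>Basis. (h \<bullet> i) *\<^sub>R pderivs [i] f x)) (at x)"
    by (rule has_derivative_continuous_partials[OF _ assms(2)])
  then show ?thesis unfolding differentiable_def by blast
qed

lemma derivative_left_inverse:
  assumes "(f has_derivative M) (at z)" "(g has_derivative N) (at (f z))"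
    and "open S" "z \<in> S" "\<And>y. y \<in> S \<Longrightarrow> g (f y) = y"
  shows "N (M h) = h"
proof -
  have "((\<lambda>y. g (f y)) has_derivative (\<lambda>h. N (M h))) (at z)"
    by (rule has_derivative_compose[OF assms(1,2)])
  then have "((\<lambda>y. y) has_derivative (\<lambda>h. N (M h))) (at z)"
    by (rule has_derivative_transform_within_open[OF _ assms(3,4)]) (use assms(5) in auto)
  moreover have "((\<lambda>y. y) has_derivative (\<lambda>h. h)) (at z)" by (rule has_derivative_ident)
  ultimately have "(\<lambda>h. N (M h)) = (\<lambda>h. h)" by (rule has_derivative_unique)
  from fun_cong[OF this, of h] show ?thesis by simp
qed

lemma diffeo_on_has_derivative:
  assumes "diffeo_on U V \<phi>" "z \<in> U"
  obtains M N where "(\<phi> has_derivative M) (at z)" "(inv_into U \<phi> has_derivative N) (at (\<phi> z))"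
    and "\<And>h. N (M h) = h" "\<And>h. M (N h) = h"
proof -
  have U: "open U" "smooth_on U \<phi>" and V: "open V" "smooth_on V (inv_into U \<phi>)"
    and bij: "bij_betw \<phi> U V"
    using assms(1) by (auto simp: diffeo_on_def)
  have "\<phi> z \<in> V" by (rule bij_betw_apply[OF bij assms(2)])
  obtain M where M: "(\<phi> has_derivative M) (at z)"
    using smooth_on_differentiable[OF U(2) assms(2)] unfolding differentiable_def by blast
  obtain N where N: "(inv_into U \<phi> has_derivative N) (at (\<phi> z))"
    using smooth_on_differentiable[OF V(2) \<open>\<phi> z \<in> V\<close>] unfolding differentiable_def by blast
  have inv_left: "inv_into U \<phi> (\<phi> y) = y" if "y \<in> U" for y
    by (rule inv_into_f_f[OF bij_betw_imp_inj_on[OF bij] that])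
  have "N (M h) = h" for h
    by (rule derivative_left_inverse[OF M N U(1) assms(2) inv_left])
  moreover have "M (N h) = h" for h
  proof (rule derivative_left_inverse[OF N _ V(1) \<open>\<phi> z \<in> V\<close>])
    show "(\<phi> has_derivative M) (at (inv_into U \<phi> (\<phi> z)))" using M inv_left[OF assms(2)] by simp
    show "\<phi> (inv_into U \<phi> y) = y" if "y \<in> V" for y
      by (rule bij_betw_inv_into_right[OF bij that])
  qed
  ultimately show ?thesis by (rule that[OF M N])
qed

lemma has_vector_derivative_inner_const:
  fixes x y :: "real \<Rightarrow> 'a::real_inner"
  assumes "open I" "s \<in> I" "(x has_vector_derivative x') (at s)" "(y has_vector_derivative y') (at s)"
    and "\<And>t. t \<in> I \<Longrightarrow> x t \<bullet> y t = c"
  shows "x s \<bullet> y' + x' \<bullet> y s = 0"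
proof -
  have "((\<lambda>t. x t \<bullet> y t) has_vector_derivative x s \<bullet> y' + x' \<bullet> y s) (at s)"
    by (rule bounded_bilinear.has_vector_derivative[OF bounded_bilinear_inner assms(3,4)])
  then have "((\<lambda>t. c) has_vector_derivative x s \<bullet> y' + x' \<bullet> y s) (at s)"
    by (rule has_vector_derivative_transform_within_open[OF _ assms(1,2)]) (use assms(5) in auto)
  then show ?thesis
    using vector_derivative_unique_at has_vector_derivative_const by blast
qed

lemma has_vector_derivative_cross3:
  assumes "(x has_vector_derivative x') (at s)" "(y has_vector_derivative y') (at s)"
  shows "((\<lambda>t. cross3 (x t) (y t)) has_vector_derivative cross3 (x s) y' + cross3 x' (y s)) (at s)"
  using bounded_bilinear.has_vector_derivative[OF _ assms] bilinear_cross
    bilinear_conv_bounded_bilinear by blast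

section \<open>Maps right-left equivalent to the swallowtail\<close>

definition swallowtail_deriv :: "real \<times> real \<Rightarrow> real \<times> real \<Rightarrow> real ^ 3" where
  "swallowtail_deriv z h = vector [fst h,
     (12 * snd z ^ 2 - 2 * fst z) * snd h - 2 * snd z * fst h,
     (12 * snd z ^ 3 - 2 * fst z * snd z) * snd h - snd z ^ 2 * fst h]"

lemma vector_3_eq_axis_sum:
  "vector [a, b, c] = a *\<^sub>R axis 1 1 + b *\<^sub>R axis 2 1 + (c::real) *\<^sub>R (axis 3 1 :: real ^ 3)"
  by (simp add: vec_eq_iff forall_3 vector_def axis_def)

lemma swallowtail_germ_has_derivative:
  "(swallowtail_germ has_derivative swallowtail_deriv z) (at z)"
proof -
  have germ: "swallowtail_germ = (\<lambda>z. fst z *\<^sub>R axis 1 1 + (4 * snd z ^ 3 - 2 * fst z * snd z) *\<^sub>R axis 2 1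
      + (3 * snd z ^ 4 - fst z * snd z ^ 2) *\<^sub>R axis 3 1)"
    by (auto simp: swallowtail_germ_def fun_eq_iff vector_3_eq_axis_sum)
  have deriv: "swallowtail_deriv z = (\<lambda>h. fst h *\<^sub>R axis 1 1
      + ((12 * snd z ^ 2 - 2 * fst z) * snd h - 2 * snd z * fst h) *\<^sub>R axis 2 1
      + ((12 * snd z ^ 3 - 2 * fst z * snd z) * snd h - snd z ^ 2 * fst h) *\<^sub>R axis 3 1)"
    by (simp add: fun_eq_iff swallowtail_deriv_def vector_3_eq_axis_sum)
  show ?thesis
    unfolding germ deriv
    by (rule derivative_eq_intros refl)+ (simp add: algebra_simps power2_eq_square power3_eq_cube)
qed

lemma swallowtail_deriv_origin: "swallowtail_deriv (0, 0) (0, 1) = 0"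
  by (simp add: swallowtail_deriv_def vec_eq_iff forall_3 vector_def)

lemma swallowtail_singular_set:
  assumes "swallowtail_deriv z w = 0" "w \<noteq> 0"
  shows "fst z = 6 * snd z ^ 2"
proof -
  have "fst w = 0" and "(12 * snd z ^ 2 - 2 * fst z) * snd w = 0"
    using assms(1) by (simp_all add: swallowtail_deriv_def vec_eq_iff forall_3 vector_def)
  moreover have "snd w \<noteq> 0"
    using assms(2) \<open>fst w = 0\<close> by (metis prod.collapse zero_prod_def)
  ultimately show ?thesis by simp
qed

lemma curve_on_parabola_tangent:
  fixes \<sigma> :: "real \<Rightarrow> real \<times> real"
  assumes "(\<sigma> has_vector_derivative \<tau>) (at 0)" "snd (\<sigma> 0) = 0"
    and "\<forall>\<^sub>F r in nhds 0. fst (\<sigma> r) = a * (snd (\<sigma> r))\<^sup>2"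
  shows "fst \<tau> = 0"
proof -
  have "((\<lambda>r. fst (\<sigma> r)) has_real_derivative fst \<tau>) (at 0)"
    and snd_deriv: "((\<lambda>r. snd (\<sigma> r)) has_real_derivative snd \<tau>) (at 0)"
    using has_derivative_fst[OF assms(1)[unfolded has_vector_derivative_def]]
      has_derivative_snd[OF assms(1)[unfolded has_vector_derivative_def]]
    by (simp_all add: has_field_derivative_def mult_commute_abs)
  moreover have "((\<lambda>r. a * (snd (\<sigma> r))\<^sup>2) has_real_derivative 0) (at 0)"
    using DERIV_cmult[OF DERIV_power[OF snd_deriv, of 2], of a] assms(2) by simp
  ultimately have "((\<lambda>r. fst (\<sigma> r)) has_real_derivative 0) (at 0)"
    using DERIV_cong_ev[OF refl assms(3) refl] by simp
  with \<open>((\<lambda>r. fst (\<sigma> r)) has_real_derivative fst \<tau>) (at 0)\<close> show ?thesis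
    by (rule DERIV_unique)
qed

lemma eventually_line_in_open:
  fixes a v :: "'a::real_normed_vector"
  assumes "open S" "a \<in> S"
  shows "\<forall>\<^sub>F r in nhds 0. a + r *\<^sub>R v \<in> S"
proof -
  have "((\<lambda>r. a + r *\<^sub>R v) \<longlongrightarrow> a) (nhds 0)"
    by (auto intro!: tendsto_eq_intros filterlim_ident)
  then show ?thesis using topological_tendstoD[OF _ assms] by blast
qed

locale swallowtail_equivalence =
  fixes D :: "(real \<times> real) set" and F :: "real \<times> real \<Rightarrow> real ^ 3" and DF
    and U U' :: "(real \<times> real) set" and W W' :: "(real ^ 3) set" and \<phi> \<psi>
  assumes diffeo_source: "diffeo_on U U' \<phi>" and diffeo_target: "diffeo_on W W' \<psi>"
    and source_in_domain: "U' \<subseteq> D"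
    and F_has_derivative: "\<And>y. y \<in> D \<Longrightarrow> (F has_derivative DF y) (at y)"
    and normal_form: "\<And>z. z \<in> U \<Longrightarrow> F (\<phi> z) \<in> W \<and> \<psi> (F (\<phi> z)) = swallowtail_germ z"
begin

lemma chain_rule:
  assumes "z \<in> U" "(\<phi> has_derivative M) (at z)" "(\<psi> has_derivative P) (at (F (\<phi> z)))"
  shows "P (DF (\<phi> z) (M h)) = swallowtail_deriv z h"
proof -
  have "\<phi> z \<in> D"
    using assms(1) diffeo_source source_in_domain bij_betw_apply by (fastforce simp: diffeo_on_def)
  then have "((\<lambda>z. F (\<phi> z)) has_derivative (\<lambda>h. DF (\<phi> z) (M h))) (at z)"
    using has_derivative_compose[OF assms(2) F_has_derivative] by blast
  from diff_chain_at[OF this, of \<psi> P] assms(3)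
  have "((\<lambda>z. \<psi> (F (\<phi> z))) has_derivative (\<lambda>h. P (DF (\<phi> z) (M h)))) (at z)"
    by (simp add: o_def)
  moreover have "open U" using diffeo_source by (simp add: diffeo_on_def)
  ultimately have "(swallowtail_germ has_derivative (\<lambda>h. P (DF (\<phi> z) (M h)))) (at z)"
    by (rule has_derivative_transform_within_open[OF _ _ assms(1)]) (use normal_form in auto)
  then have "swallowtail_deriv z = (\<lambda>h. P (DF (\<phi> z) (M h)))"
    by (rule has_derivative_unique[OF swallowtail_germ_has_derivative])
  then show ?thesis by simp
qed

lemma kernel_iff:
  assumes "z \<in> U" "(\<phi> has_derivative M) (at z)"
  shows "DF (\<phi> z) (M h) = 0 \<longleftrightarrow> swallowtail_deriv z h = 0"
proof -
  have "F (\<phi> z) \<in> W" using normal_form[OF assms(1)] by blast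
  then obtain P Q where P: "(\<psi> has_derivative P) (at (F (\<phi> z)))"
    and Q: "(inv_into W \<psi> has_derivative Q) (at (\<psi> (F (\<phi> z))))"
    and QP: "\<And>x. Q (P x) = x" and "\<And>x. P (Q x) = x"
    by (rule diffeo_on_has_derivative[OF diffeo_target]) blast
  have "P 0 = 0" "Q 0 = 0"
    using linear_0 has_derivative_linear P Q by blast+
  then show ?thesis
    using chain_rule[OF assms P, of h] QP[of "DF (\<phi> z) (M h)"] by auto
qed

lemma kernel_at_origin:
  assumes "(0, 0) \<in> U" "(\<phi> has_derivative M) (at (0, 0))"
  shows "DF (\<phi> (0, 0)) (M (0, 1)) = 0"
  using kernel_iff[OF assms] swallowtail_deriv_origin by simp

lemma singular_point:
  assumes "z \<in> U" "DF (\<phi> z) k = 0" "k \<noteq> 0"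
  shows "fst z = 6 * snd z ^ 2"
proof -
  obtain M N where M: "(\<phi> has_derivative M) (at z)"
    and "(inv_into U \<phi> has_derivative N) (at (\<phi> z))" and "\<And>h. N (M h) = h"
    and MN: "\<And>h. M (N h) = h"
    by (rule diffeo_on_has_derivative[OF diffeo_source assms(1)]) blast
  have "N k \<noteq> 0"
  proof
    assume "N k = 0"
    then have "M (N k) = 0" using linear_0[OF has_derivative_linear[OF M]] by simp
    then show False using MN[of k] assms(3) by simp
  qed
  moreover have "swallowtail_deriv z (N k) = 0"
    using kernel_iff[OF assms(1) M, of "N k"] MN[of k] assms(2) by simp
  ultimately show ?thesis using swallowtail_singular_set by blast
qed

lemma singular_curve_tangent:
  assumes "(\<sigma> has_vector_derivative \<tau>) (at 0)" "\<sigma> 0 = (0, 0)"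
    and "\<forall>\<^sub>F r in nhds 0. \<sigma> r \<in> U \<and> (\<exists>k. k \<noteq> 0 \<and> DF (\<phi> (\<sigma> r)) k = 0)"
  shows "fst \<tau> = 0"
proof (rule curve_on_parabola_tangent[OF assms(1)])
  show "snd (\<sigma> 0) = 0" using assms(2) by simp
  show "\<forall>\<^sub>F r in nhds 0. fst (\<sigma> r) = 6 * (snd (\<sigma> r))\<^sup>2"
    using assms(3) by eventually_elim (use singular_point in blast)
qed


(* In swallowtail coordinates the singular set is the parabola x = 6 t^2, tangent at the origin
   to the t-axis; a line of singular points through phi (0, 0) pulls back to a curve on it. *)
lemma singular_line_tangent:
  assumes "(0, 0) \<in> U" "(inv_into U \<phi> has_derivative N) (at (\<phi> (0, 0)))"
    and singular: "\<forall>\<^sub>F r in nhds 0. \<exists>k. k \<noteq> 0 \<and> DF (\<phi> (0, 0) + r *\<^sub>R v) k = 0"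
  shows "fst (N v) = 0"
proof -
  let ?a = "\<phi> (0, 0)"
  define \<sigma> where "\<sigma> r = inv_into U \<phi> (?a + r *\<^sub>R v)" for r
  have bij: "bij_betw \<phi> U U'" and "open U'" using diffeo_source by (auto simp: diffeo_on_def)
  have "((\<lambda>r. ?a + r *\<^sub>R v) has_derivative (\<lambda>r. r *\<^sub>R v)) (at 0)"
    by (auto intro!: derivative_eq_intros)
  with assms(2) have "(\<sigma> has_derivative (\<lambda>r. N (r *\<^sub>R v))) (at 0)"
    unfolding \<sigma>_def using has_derivative_compose[of "\<lambda>r. ?a + r *\<^sub>R v" _ 0 UNIV] by fastforce
  then have "(\<sigma> has_vector_derivative N v) (at 0)"
    by (simp add: has_vector_derivative_def linear_scale[OF has_derivative_linear[OF assms(2)]])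
  moreover have "\<sigma> 0 = (0, 0)"
    using inv_into_f_f[OF bij_betw_imp_inj_on[OF bij] assms(1)] by (simp add: \<sigma>_def)
  moreover have "\<forall>\<^sub>F r in nhds 0. \<sigma> r \<in> U \<and> (\<exists>k. k \<noteq> 0 \<and> DF (\<phi> (\<sigma> r)) k = 0)"
    using eventually_line_in_open[OF \<open>open U'\<close> bij_betw_apply[OF bij assms(1)], where v = v] singular
  proof eventually_elim
    case (elim r)
    then show ?case
      using bij_betw_apply[OF bij_betw_inv_into[OF bij]] bij_betw_inv_into_right[OF bij]
      by (simp add: \<sigma>_def)
  qed
  ultimately show ?thesis by (rule singular_curve_tangent)
qed

end


lemma rl_equiv_swallowtail_chart:
  assumes "rl_equiv_germ D F a swallowtail_germ (0, 0)"
    and "\<And>y. y \<in> D \<Longrightarrow> (F has_derivative DF y) (at y)"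
  obtains U U' W W' \<phi> \<psi> where "swallowtail_equivalence D F DF U U' W W' \<phi> \<psi>"
    and "(0, 0) \<in> U" "\<phi> (0, 0) = a"
proof -
  obtain U U' W W' \<phi> \<psi> where "(0, 0) \<in> U" "U' \<subseteq> D" "diffeo_on U U' \<phi>" "diffeo_on W W' \<psi>"
    "\<phi> (0, 0) = a" "\<And>z. z \<in> U \<Longrightarrow> F (\<phi> z) \<in> W \<and> \<psi> (F (\<phi> z)) = swallowtail_germ z"
    using assms(1) unfolding rl_equiv_germ_def by blast
  then show ?thesis
    using that[of U U' W W' \<phi> \<psi>] assms(2) by (simp add: swallowtail_equivalence_def)
qed

lemma rl_equiv_swallowtail_singular:
  assumes "rl_equiv_germ D F a swallowtail_germ (0, 0)"
    and "\<And>y. y \<in> D \<Longrightarrow> (F has_derivative DF y) (at y)"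
  shows "\<exists>w. w \<noteq> 0 \<and> DF a w = 0"
proof -
  obtain U U' W W' \<phi> \<psi> where "swallowtail_equivalence D F DF U U' W W' \<phi> \<psi>"
    and origin: "(0, 0) \<in> U" "\<phi> (0, 0) = a"
    by (rule rl_equiv_swallowtail_chart[OF assms])
  then interpret swallowtail_equivalence D F DF U U' W W' \<phi> \<psi> by simp
  obtain M N where M: "(\<phi> has_derivative M) (at (0, 0))"
    and N: "(inv_into U \<phi> has_derivative N) (at (\<phi> (0, 0)))"
    and NM: "\<And>h. N (M h) = h" and "\<And>h. M (N h) = h"
    by (rule diffeo_on_has_derivative[OF diffeo_source origin(1)]) blast
  have "M (0, 1) \<noteq> 0"
  proof
    assume "M (0, 1) = 0"
    then have "N (M (0, 1)) = 0" using linear_0[OF has_derivative_linear[OF N]] by simp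
    then show False using NM[of "(0, 1)"] by (simp add: zero_prod_def)
  qed
  moreover have "DF a (M (0, 1)) = 0"
    using kernel_at_origin[OF origin(1) M] origin(2) by simp
  ultimately show ?thesis by blast
qed

lemma rl_equiv_swallowtail_singular_line:
  assumes "rl_equiv_germ D F a swallowtail_germ (0, 0)"
    and F_deriv: "\<And>y. y \<in> D \<Longrightarrow> (F has_derivative DF y) (at y)"
    and singular: "\<forall>\<^sub>F r in nhds 0. \<exists>k. k \<noteq> 0 \<and> DF (a + r *\<^sub>R v) k = 0"
  shows "DF a v = 0"
proof -
  obtain U U' W W' \<phi> \<psi> where "swallowtail_equivalence D F DF U U' W W' \<phi> \<psi>"
    and origin: "(0, 0) \<in> U" "\<phi> (0, 0) = a"
    by (rule rl_equiv_swallowtail_chart[OF assms(1,2)])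
  then interpret swallowtail_equivalence D F DF U U' W W' \<phi> \<psi> by simp
  obtain M N where M: "(\<phi> has_derivative M) (at (0, 0))"
    and N: "(inv_into U \<phi> has_derivative N) (at (\<phi> (0, 0)))"
    and "\<And>h. N (M h) = h" and MN: "\<And>h. M (N h) = h"
    by (rule diffeo_on_has_derivative[OF diffeo_source origin(1)]) blast
  have "fst (N v) = 0"
    using singular_line_tangent[OF origin(1) N] singular origin(2) by simp
  then have v_eq: "v = snd (N v) *\<^sub>R M (0, 1)"
    using MN[of v] linear_scale[OF has_derivative_linear[OF M], of "snd (N v)" "(0, 1)"]
    by (metis prod.collapse scaleR_Pair scaleR_zero_right mult.right_neutral real_scaleR_def)
  have "a \<in> D"
    using diffeo_source source_in_domain origin bij_betw_apply by (fastforce simp: diffeo_on_def)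
  then have "linear (DF a)" using F_deriv has_derivative_linear by blast
  have "DF a v = DF a (snd (N v) *\<^sub>R M (0, 1))" using v_eq by (rule arg_cong)
  also have "\<dots> = snd (N v) *\<^sub>R DF a (M (0, 1))" by (rule linear_scale[OF \<open>linear (DF a)\<close>])
  also have "\<dots> = 0" using kernel_at_origin[OF origin(1) M] origin(2) by simp
  finally show ?thesis .
qed

section \<open>Orthonormal frames\<close>

lemma nontrivial_kernel_det2:
  fixes w :: "real \<times> real"
  assumes "fst w * a + snd w * b = 0" "fst w * c + snd w * d = 0" "w \<noteq> 0"
  shows "a * d - b * c = 0"
proof (rule ccontr)
  assume det: "a * d - b * c \<noteq> 0"
  have "(a * d - b * c) * fst w = d * (fst w * a + snd w * b) - b * (fst w * c + snd w * d)"
    by (simp add: algebra_simps)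
  also have "\<dots> = 0" by (simp only: assms(1,2) mult_zero_right diff_self)
  finally have "fst w = 0" using det by simp
  have "(a * d - b * c) * snd w = a * (fst w * c + snd w * d) - c * (fst w * a + snd w * b)"
    by (simp add: algebra_simps)
  also have "\<dots> = 0" by (simp only: assms(1,2) mult_zero_right diff_self)
  finally have "snd w = 0" using det by simp
  with \<open>fst w = 0\<close> show False using assms(3) by (simp add: prod_eq_iff)
qed

lemma orthonormal_pair_combination_eq_0:
  fixes e f :: "'a::real_inner"
  assumes "e \<bullet> e = 1" "f \<bullet> f = 1" "f \<bullet> e = 0" "a *\<^sub>R e + b *\<^sub>R f = 0"
  shows "a = 0" "b = 0"
proof -
  have "a = (a *\<^sub>R e + b *\<^sub>R f) \<bullet> e" "b = (a *\<^sub>R e + b *\<^sub>R f) \<bullet> f"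
    using assms(1-3) by (simp_all add: inner_add_left inner_commute[of e f])
  then show "a = 0" "b = 0" unfolding assms(4) by simp_all
qed

lemma orthonormal_frame_expansion:
  fixes e m x :: "real ^ 3"
  assumes "e \<bullet> e = 1" "m \<bullet> m = 1" "m \<bullet> e = 0"
  shows "x = (x \<bullet> e) *\<^sub>R e + (x \<bullet> cross3 m e) *\<^sub>R cross3 m e + (x \<bullet> m) *\<^sub>R m"
proof -
  have triple: "(a \<bullet> cross3 b c) *\<^sub>R x
      = (x \<bullet> cross3 b c) *\<^sub>R a + (x \<bullet> cross3 c a) *\<^sub>R b + (x \<bullet> cross3 a b) *\<^sub>R c" for a b c
    by (simp add: cross3_simps forall_3)
  have "cross3 (cross3 m e) m = e" and "cross3 e (cross3 m e) = m"
    using assms Lagrange[of m m e] Lagrange[of e m e] cross_skew[of "cross3 m e" m]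
    by (simp_all add: inner_commute)
  then show ?thesis using triple[of e "cross3 m e" m] assms(1) by simp
qed

section \<open>The boundary-envelope of a framed strip\<close>

definition characteristic_direction :: "(real \<Rightarrow> real ^ 3) \<Rightarrow> real \<Rightarrow> real ^ 3" where
  "characteristic_direction n s = cross3 (n s) (vector_derivative n (at s))"

lemma envelope_map_has_derivative:
  assumes "(\<gamma> has_vector_derivative g') (at s)"
    and "(characteristic_direction n has_vector_derivative c') (at s)"
  shows "(envelope_map \<gamma> n has_derivative
     (\<lambda>h. fst h *\<^sub>R (g' + u *\<^sub>R c') + snd h *\<^sub>R characteristic_direction n s)) (at (s, u))"
proof -
  have eq: "envelope_map \<gamma> n = (\<lambda>y. \<gamma> (fst y) + snd y *\<^sub>R characteristic_direction n (fst y))"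
    by (auto simp: envelope_map_def characteristic_direction_def fun_eq_iff)
  have "((\<lambda>y. \<gamma> (fst y)) has_derivative (\<lambda>h. fst h *\<^sub>R g')) (at (s, u))"
    and "((\<lambda>y. characteristic_direction n (fst y)) has_derivative (\<lambda>h. fst h *\<^sub>R c')) (at (s, u))"
    using diff_chain_at[OF has_derivative_fst[OF has_derivative_ident], of _ "\<lambda>x. x *\<^sub>R _" "(s, u)"]
      assms unfolding has_vector_derivative_def o_def by auto
  then have "((\<lambda>y. \<gamma> (fst y) + snd y *\<^sub>R characteristic_direction n (fst y)) has_derivative
      (\<lambda>h. fst h *\<^sub>R g' + (u *\<^sub>R (fst h *\<^sub>R c') + snd h *\<^sub>R characteristic_direction n s))) (at (s, u))"
    by (auto intro!: derivative_eq_intros)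
  then show ?thesis unfolding eq by (simp add: algebra_simps)
qed

locale framed_strip =
  fixes I :: "real set" and \<gamma> n :: "real \<Rightarrow> real ^ 3"
  assumes open_I: "open I"
    and smooth_curve: "smooth_on I \<gamma>" and smooth_normal: "smooth_on I n"
    and unit_tangent: "\<And>s. s \<in> I \<Longrightarrow> norm (vector_derivative \<gamma> (at s)) = 1"
    and unit_normal: "\<And>s. s \<in> I \<Longrightarrow> norm (n s) = 1"
    and normal_tangent: "\<And>s. s \<in> I \<Longrightarrow> n s \<bullet> vector_derivative \<gamma> (at s) = 0"
begin

abbreviation "e1 \<equiv> frame_e1 \<gamma>"
abbreviation "e2 \<equiv> frame_e2 \<gamma> n"
abbreviation "k1 \<equiv> kappa1 \<gamma> n"
abbreviation "k2 \<equiv> kappa2 \<gamma> n"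
abbreviation "k3 \<equiv> kappa3 \<gamma> n"

lemma smooth_e1: "smooth_on I e1"
proof -
  have "e1 = (\<lambda>s. vector_derivative \<gamma> (at s))" by (rule ext) (simp add: frame_e1_def)
  then show ?thesis using smooth_on_real_vector_derivative[OF smooth_curve] by simp
qed

lemma curve_has_vector_derivative: "s \<in> I \<Longrightarrow> (\<gamma> has_vector_derivative e1 s) (at s)"
  unfolding frame_e1_def by (rule smooth_on_real_has_vector_derivative[OF smooth_curve])

lemma e1_has_vector_derivative:
  "s \<in> I \<Longrightarrow> (e1 has_vector_derivative vector_derivative e1 (at s)) (at s)"
  by (rule smooth_on_real_has_vector_derivative[OF smooth_e1])

lemma e1'_has_vector_derivative:
  "s \<in> I \<Longrightarrow> ((\<lambda>t. vector_derivative e1 (at t)) has_vector_derivative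
     vector_derivative (\<lambda>t. vector_derivative e1 (at t)) (at s)) (at s)"
  by (rule smooth_on_real_has_vector_derivative[OF smooth_on_real_vector_derivative[OF smooth_e1]])

lemma normal_has_vector_derivative:
  "s \<in> I \<Longrightarrow> (n has_vector_derivative vector_derivative n (at s)) (at s)"
  by (rule smooth_on_real_has_vector_derivative[OF smooth_normal])

lemma normal'_has_vector_derivative:
  "s \<in> I \<Longrightarrow> ((\<lambda>t. vector_derivative n (at t)) has_vector_derivative
     vector_derivative (\<lambda>t. vector_derivative n (at t)) (at s)) (at s)"
  by (rule smooth_on_real_has_vector_derivative[OF smooth_on_real_vector_derivative[OF smooth_normal]])

lemma e2_has_vector_derivative_cross:
  "s \<in> I \<Longrightarrow> (e2 has_vector_derivative
     cross3 (n s) (vector_derivative e1 (at s)) + cross3 (vector_derivative n (at s)) (e1 s)) (at s)"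
  unfolding frame_e2_def[abs_def]
  by (rule has_vector_derivative_cross3[OF normal_has_vector_derivative e1_has_vector_derivative])

lemma e2_has_vector_derivative:
  "s \<in> I \<Longrightarrow> (e2 has_vector_derivative vector_derivative e2 (at s)) (at s)"
  using e2_has_vector_derivative_cross vector_derivative_at by metis

lemma frame_orthonormal:
  assumes "s \<in> I"
  shows "e1 s \<bullet> e1 s = 1" "n s \<bullet> n s = 1" "n s \<bullet> e1 s = 0"
    and "e2 s \<bullet> e2 s = 1" "e2 s \<bullet> e1 s = 0" "e2 s \<bullet> n s = 0"
proof -
  show "e1 s \<bullet> e1 s = 1" and "n s \<bullet> n s = 1" and "n s \<bullet> e1 s = 0"
    using assms unit_tangent unit_normal normal_tangent by (simp_all add: frame_e1_def dot_square_norm)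
  then show "e2 s \<bullet> e2 s = 1" "e2 s \<bullet> e1 s = 0" "e2 s \<bullet> n s = 0"
    by (simp_all add: frame_e2_def dot_cross dot_cross_self inner_commute)
qed

lemma frame_expansion:
  "s \<in> I \<Longrightarrow> x = (x \<bullet> e1 s) *\<^sub>R e1 s + (x \<bullet> e2 s) *\<^sub>R e2 s + (x \<bullet> n s) *\<^sub>R n s"
  unfolding frame_e2_def by (rule orthonormal_frame_expansion[OF frame_orthonormal(1-3)])

lemma frame_e1_derivative:
  assumes "s \<in> I"
  shows "vector_derivative e1 (at s) = k1 s *\<^sub>R e2 s + k2 s *\<^sub>R n s"
proof -
  note e1' = e1_has_vector_derivative[OF assms]
  have "e1 s \<bullet> vector_derivative e1 (at s) + vector_derivative e1 (at s) \<bullet> e1 s = 0"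
    using frame_orthonormal(1) by (intro has_vector_derivative_inner_const[OF open_I assms e1' e1']) auto
  then have "vector_derivative e1 (at s) \<bullet> e1 s = 0" by (simp add: inner_commute)
  then show ?thesis
    by (subst frame_expansion[OF assms, of "vector_derivative e1 (at s)"])
      (simp add: kappa1_def kappa2_def)
qed

lemma frame_e2_derivative:
  assumes "s \<in> I"
  shows "vector_derivative e2 (at s) = - k1 s *\<^sub>R e1 s + k3 s *\<^sub>R n s"
proof -
  note e1' = e1_has_vector_derivative[OF assms] and e2' = e2_has_vector_derivative[OF assms]
  have "e2 s \<bullet> vector_derivative e1 (at s) + vector_derivative e2 (at s) \<bullet> e1 s = 0"
    using frame_orthonormal(5) by (intro has_vector_derivative_inner_const[OF open_I assms e2' e1']) auto
  moreover have "e2 s \<bullet> vector_derivative e2 (at s) + vector_derivative e2 (at s) \<bullet> e2 s = 0"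
    using frame_orthonormal(4) by (intro has_vector_derivative_inner_const[OF open_I assms e2' e2']) auto
  ultimately have "vector_derivative e2 (at s) \<bullet> e1 s = - k1 s" "vector_derivative e2 (at s) \<bullet> e2 s = 0"
    by (simp_all add: kappa1_def inner_commute)
  then show ?thesis
    by (subst frame_expansion[OF assms, of "vector_derivative e2 (at s)"]) (simp add: kappa3_def)
qed

lemma normal_derivative:
  assumes "s \<in> I"
  shows "vector_derivative n (at s) = - k2 s *\<^sub>R e1 s - k3 s *\<^sub>R e2 s"
proof -
  note n' = normal_has_vector_derivative[OF assms]
  have "n s \<bullet> vector_derivative e1 (at s) + vector_derivative n (at s) \<bullet> e1 s = 0"
    using frame_orthonormal(3)
    by (intro has_vector_derivative_inner_const[OF open_I assms n' e1_has_vector_derivative[OF assms]]) auto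
  moreover have "n s \<bullet> vector_derivative e2 (at s) + vector_derivative n (at s) \<bullet> e2 s = 0"
    using frame_orthonormal(6)
    by (intro has_vector_derivative_inner_const[OF open_I assms n' e2_has_vector_derivative[OF assms]])
      (auto simp: inner_commute)
  moreover have "n s \<bullet> vector_derivative n (at s) + vector_derivative n (at s) \<bullet> n s = 0"
    using frame_orthonormal(2) by (intro has_vector_derivative_inner_const[OF open_I assms n' n']) auto
  ultimately have "vector_derivative n (at s) \<bullet> e1 s = - k2 s"
    and "vector_derivative n (at s) \<bullet> e2 s = - k3 s" and "vector_derivative n (at s) \<bullet> n s = 0"
    by (simp_all add: kappa2_def kappa3_def inner_commute)
  then show ?thesis by (subst frame_expansion[OF assms, of "vector_derivative n (at s)"]) simp
qed

lemma kappa2_has_real_derivative: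
  assumes "s \<in> I"
  shows "(k2 has_real_derivative deriv k2 s) (at s)"
proof -
  have "k2 = (\<lambda>t. vector_derivative e1 (at t) \<bullet> n t)" by (rule ext) (simp add: kappa2_def)
  then have "(k2 has_vector_derivative vector_derivative e1 (at s) \<bullet> vector_derivative n (at s)
      + vector_derivative (\<lambda>t. vector_derivative e1 (at t)) (at s) \<bullet> n s) (at s)"
    using bounded_bilinear.has_vector_derivative[OF bounded_bilinear_inner
        e1'_has_vector_derivative[OF assms] normal_has_vector_derivative[OF assms]] by simp
  then show ?thesis
    using DERIV_imp_deriv has_real_derivative_iff_has_vector_derivative by metis
qed

lemma kappa3_has_real_derivative:
  assumes "s \<in> I"
  shows "(k3 has_real_derivative deriv k3 s) (at s)"
proof -
  let ?n' = "\<lambda>t. vector_derivative n (at t)"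
  have k3_eq: "k3 t = cross3 (?n' t) (e1 t) \<bullet> n t" if "t \<in> I" for t
  proof -
    have "k3 t = (cross3 (n t) (vector_derivative e1 (at t)) + cross3 (?n' t) (e1 t)) \<bullet> n t"
      unfolding kappa3_def vector_derivative_at[OF e2_has_vector_derivative_cross[OF that]] ..
    moreover have "cross3 (n t) x \<bullet> n t = 0" for x
      by (metis dot_cross_self(1) inner_commute)
    ultimately show ?thesis by (simp add: inner_add_left)
  qed
  from bounded_bilinear.has_vector_derivative[OF bounded_bilinear_inner
      has_vector_derivative_cross3[OF normal'_has_vector_derivative[OF assms]
        e1_has_vector_derivative[OF assms]] normal_has_vector_derivative[OF assms]]
  obtain D where "((\<lambda>t. cross3 (?n' t) (e1 t) \<bullet> n t) has_vector_derivative D) (at s)" by blast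
  then have "(k3 has_vector_derivative D) (at s)"
    by (rule has_vector_derivative_transform_within_open[OF _ open_I assms]) (simp add: k3_eq)
  then show ?thesis
    using DERIV_imp_deriv has_real_derivative_iff_has_vector_derivative by metis
qed

lemma characteristic_direction_frame:
  assumes "s \<in> I"
  shows "characteristic_direction n s = k3 s *\<^sub>R e1 s - k2 s *\<^sub>R e2 s"
proof -
  have "cross3 (n s) (e2 s) = - e1 s"
    using Lagrange[of "n s" "n s" "e1 s"] frame_orthonormal[OF assms] by (simp add: frame_e2_def)
  then show ?thesis
    by (simp add: characteristic_direction_def normal_derivative[OF assms] cross_mult_right
        Cross3.right_diff_distrib frame_e2_def[symmetric])
qed

lemma norm_characteristic_direction:
  assumes "s \<in> I"
  shows "norm (characteristic_direction n s) = sqrt ((k2 s)\<^sup>2 + (k3 s)\<^sup>2)"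
  using frame_orthonormal[OF assms]
  by (simp add: characteristic_direction_frame[OF assms] norm_eq_sqrt_inner inner_diff_left
      inner_diff_right inner_commute power2_eq_square algebra_simps)

lemma characteristic_direction_has_vector_derivative:
  assumes "s \<in> I"
  shows "(characteristic_direction n has_vector_derivative
     (deriv k3 s + k1 s * k2 s) *\<^sub>R e1 s + (- deriv k2 s + k1 s * k3 s) *\<^sub>R e2 s) (at s)"
proof -
  have "((\<lambda>t. k3 t *\<^sub>R e1 t - k2 t *\<^sub>R e2 t) has_vector_derivative
      (k3 s *\<^sub>R vector_derivative e1 (at s) + deriv k3 s *\<^sub>R e1 s)
      - (k2 s *\<^sub>R vector_derivative e2 (at s) + deriv k2 s *\<^sub>R e2 s)) (at s)"
    by (intro has_vector_derivative_diff has_vector_derivative_scaleR kappa2_has_real_derivative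
        kappa3_has_real_derivative e1_has_vector_derivative e2_has_vector_derivative assms)
  then have "((\<lambda>t. k3 t *\<^sub>R e1 t - k2 t *\<^sub>R e2 t) has_vector_derivative
      (deriv k3 s + k1 s * k2 s) *\<^sub>R e1 s + (- deriv k2 s + k1 s * k3 s) *\<^sub>R e2 s) (at s)"
    by (simp add: frame_e1_derivative[OF assms] frame_e2_derivative[OF assms] algebra_simps)
  then show ?thesis
    by (rule has_vector_derivative_transform_within_open[OF _ open_I assms])
      (simp add: characteristic_direction_frame)
qed

definition envelope_differential :: "real \<times> real \<Rightarrow> real \<times> real \<Rightarrow> real ^ 3" where
  "envelope_differential y h = fst h *\<^sub>R (e1 (fst y) + snd y *\<^sub>R
     vector_derivative (characteristic_direction n) (at (fst y)))
     + snd h *\<^sub>R characteristic_direction n (fst y)"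

lemma envelope_has_derivative:
  assumes "y \<in> I \<times> UNIV"
  shows "(envelope_map \<gamma> n has_derivative envelope_differential y) (at y)"
proof -
  obtain s u where y: "y = (s, u)" and s: "s \<in> I" using assms by auto
  note c' = characteristic_direction_has_vector_derivative[OF s]
  have "(characteristic_direction n has_vector_derivative
      vector_derivative (characteristic_direction n) (at s)) (at s)"
    using c' vector_derivative_at[OF c'] by simp
  from envelope_map_has_derivative[OF curve_has_vector_derivative[OF s] this, of u]
  show ?thesis by (simp add: y envelope_differential_def[abs_def])
qed

lemma envelope_differential_frame:
  assumes "s \<in> I"
  shows "envelope_differential (s, u) h
    = (fst h * (1 + u * (deriv k3 s + k1 s * k2 s)) + snd h * k3 s) *\<^sub>R e1 s
      + (fst h * u * (- deriv k2 s + k1 s * k3 s) - snd h * k2 s) *\<^sub>R e2 s"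
  by (simp add: envelope_differential_def characteristic_direction_frame[OF assms]
      vector_derivative_at[OF characteristic_direction_has_vector_derivative[OF assms]] algebra_simps)

lemma swallowtail_parameter:
  assumes "s \<in> I"
    and "rl_equiv_germ (I \<times> UNIV) (envelope_map \<gamma> n) (s, u) swallowtail_germ (0, 0)"
  shows "k2 s + u * (k2 s * (deriv k3 s + k1 s * k2 s) + k3 s * (- deriv k2 s + k1 s * k3 s)) = 0"
proof -
  obtain w where "w \<noteq> 0" and "envelope_differential (s, u) w = 0"
    using rl_equiv_swallowtail_singular[OF assms(2) envelope_has_derivative] by blast
  then have "(fst w * (1 + u * (deriv k3 s + k1 s * k2 s)) + snd w * k3 s) *\<^sub>R e1 s
      + (fst w * u * (- deriv k2 s + k1 s * k3 s) - snd w * k2 s) *\<^sub>R e2 s = 0"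
    by (simp only: envelope_differential_frame[OF assms(1)])
  then have "fst w * (1 + u * (deriv k3 s + k1 s * k2 s)) + snd w * k3 s = 0"
    and "fst w * u * (- deriv k2 s + k1 s * k3 s) - snd w * k2 s = 0"
    by (rule orthonormal_pair_combination_eq_0[OF frame_orthonormal(1,4,5)[OF assms(1)]])+
  then have "fst w * (1 + u * (deriv k3 s + k1 s * k2 s)) + snd w * k3 s = 0"
    and "fst w * (u * (- deriv k2 s + k1 s * k3 s)) + snd w * (- k2 s) = 0"
    by (simp_all add: algebra_simps)
  with \<open>w \<noteq> 0\<close> have "(1 + u * (deriv k3 s + k1 s * k2 s)) * (- k2 s)
      - k3 s * (u * (- deriv k2 s + k1 s * k3 s)) = 0"
    by (intro nontrivial_kernel_det2[of w])
  then show ?thesis by (simp add: algebra_simps)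
qed

lemma swallowtail_degenerate:
  assumes "s \<in> I"
    and rl: "rl_equiv_germ (I \<times> UNIV) (envelope_map \<gamma> n) (s, u) swallowtail_germ (0, 0)"
    and "k2 s * (deriv k3 s + k1 s * k2 s) + k3 s * (- deriv k2 s + k1 s * k3 s) = 0"
  shows "characteristic_direction n s = 0"
proof -
  have "k2 s = 0" using swallowtail_parameter[OF assms(1,2)] assms(3) by simp
  show ?thesis
  proof (cases "k3 s = 0")
    case True
    with \<open>k2 s = 0\<close> show ?thesis by (simp add: characteristic_direction_frame[OF assms(1)])
  next
    case False
    with \<open>k2 s = 0\<close> assms(3) have "- deriv k2 s + k1 s * k3 s = 0" by simp
    \<comment> \<open>then the differential at every point of the characteristic line has a kernel\<close>
    then have "envelope_differential ((s, u) + r *\<^sub>R (0, 1))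
        (k3 s, - (1 + (u + r) * (deriv k3 s + k1 s * k2 s))) = 0" for r
      using \<open>k2 s = 0\<close> by (simp add: envelope_differential_frame[OF assms(1)] algebra_simps)
    moreover have "(k3 s, - (1 + (u + r) * (deriv k3 s + k1 s * k2 s))) \<noteq> 0" for r
      using False by (simp add: zero_prod_def)
    ultimately have "\<forall>\<^sub>F r in nhds 0. \<exists>k. k \<noteq> 0 \<and> envelope_differential ((s, u) + r *\<^sub>R (0, 1)) k = 0"
      by (intro always_eventually) blast
    from rl_equiv_swallowtail_singular_line[OF rl envelope_has_derivative this]
    have "envelope_differential (s, u) (0, 1) = 0" .
    then show ?thesis by (simp add: envelope_differential_def)
  qed
qed

end

theorem proposition1p11:
  fixes \<gamma> n :: "real \<Rightarrow> real ^ 3" and I :: "real set" and s1 :: real and p :: "real ^ 3"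
  assumes "open I" and "s1 \<in> I"
    and "smooth_on I \<gamma>" and "smooth_on I n"
    and "\<forall>s\<in>I. norm (vector_derivative \<gamma> (at s)) = 1"
    and "\<forall>s\<in>I. norm (n s) = 1 \<and> n s \<bullet> vector_derivative \<gamma> (at s) = 0"
    and "envelope_swallowtail I \<gamma> n s1 p"
  shows "dist (\<gamma> s1) p =
    \<bar>kappa2 \<gamma> n s1 * sqrt ((kappa2 \<gamma> n s1)\<^sup>2 + (kappa3 \<gamma> n s1)\<^sup>2) /
      (kappa2 \<gamma> n s1 * (deriv (kappa3 \<gamma> n) s1 + kappa1 \<gamma> n s1 * kappa2 \<gamma> n s1)
       + kappa3 \<gamma> n s1 * (- deriv (kappa2 \<gamma> n) s1 + kappa1 \<gamma> n s1 * kappa3 \<gamma> n s1))\<bar>"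
proof -
  interpret framed_strip I \<gamma> n using assms(1,3-6) by unfold_locales auto
  obtain u where p: "p = envelope_map \<gamma> n (s1, u)"
    and rl: "rl_equiv_germ (I \<times> UNIV) (envelope_map \<gamma> n) (s1, u) swallowtail_germ (0, 0)"
    using assms(7) unfolding envelope_swallowtail_def by blast
  have dist: "dist (\<gamma> s1) p = \<bar>u\<bar> * norm (characteristic_direction n s1)"
    by (simp add: p envelope_map_def characteristic_direction_def dist_norm)
  show ?thesis
  proof (cases "k2 s1 * (deriv k3 s1 + k1 s1 * k2 s1) + k3 s1 * (- deriv k2 s1 + k1 s1 * k3 s1) = 0")
    case True
    \<comment> \<open>the right-hand side is 0 by the convention x / 0 = 0\<close>
    then show ?thesis using dist swallowtail_degenerate[OF assms(2) rl] by simp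
  next
    case False
    then have "u = - k2 s1 / (k2 s1 * (deriv k3 s1 + k1 s1 * k2 s1) + k3 s1 * (- deriv k2 s1 + k1 s1 * k3 s1))"
      using swallowtail_parameter[OF assms(2) rl] by (simp add: field_simps)
    then show ?thesis
      using dist norm_characteristic_direction[OF assms(2)] by (simp add: abs_divide abs_mult)
  qed
qed

end
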